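(* Let $d>0$ be fixed. For every integer $N>d$ put $p=d/N$ and let $D_N(i,j)$, $S_N(i,j)$ ($1\le i,j\le N$) be the mean-field node-based quantities defined in the context. Let $\tilde{\mathcal D}_N:[0,1)^2\to\mathbb R$ be the scaled function defined in the context. Then, as $N\to\infty$, $\tilde{\mathcal D}_N$ converges uniformly on $[0,1)^2$ to $$\mathcal D_\infty(\alpha,\beta)=\frac{d\,e^{d|\beta-\alpha|}}{\bigl(1-e^{-d\min(\alpha,\beta)}+e^{d|\beta-\alpha|}\bigr)^2}.$$ Equivalently, $\mathcal D_\infty(\alpha,\beta)=\dfrac{d\,e^{d(\beta-\alpha)}}{(1-e^{-d\alpha}+e^{d(\beta-\alpha)})^2}$ for all $(\alpha,\beta)$; this expression is symmetric in $(\alpha,\beta)$.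
   Context: Mean-field node-based recursion: fix $N$ and $p\in(0,1]$. For $i,j\in\{1,\dots,N\}$ define $D_N(i,j)$ and $S_N(i,j)$ jointly by $S_N(i,j)=1-\sum_{k=1}^{j-1}D_N(i,k)$, $D_N(i,i)=0$, and $D_N(i,j)=p\,S_N(i,j)\,S_N(j,i)$ for $i\ne j$. (This is well defined by induction on $i+j$, since $S_N(i,j)$ only involves $D_N(i,k)$ with $k<j$.) For $\alpha\in[0,1)$ write $i_N(\alpha)=\lfloor N\alpha\rfloor+1\in\{1,\dots,N\}$. The scaled function is $\tilde{\mathcal D}_N(\alpha,\beta)=N\,D_N(i_N(\alpha),i_N(\beta))$ if $\lfloor N\alpha\rfloor\neq\lfloor N\beta\rfloor$, and $\tilde{\mathcal D}_N(\alpha,\beta)=N p\,S_N(i_N(\alpha),i_N(\alpha))^2$ otherwise. Here $p=d/N$. *)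

theory Defs
  imports "HOL-Analysis.Analysis"
begin

text \<open>Mean-field node-based recursion (indices are natural numbers, meaningful for 1..N).  We define D and S by mutual recursion
  on i + j (D at (i,j) calls S at (i,j) and (j,i); S at (i,j) calls D at (i,k), k < j).\<close>

function D_mf :: "real \<Rightarrow> nat \<Rightarrow> nat \<Rightarrow> real"
  and S_mf :: "real \<Rightarrow> nat \<Rightarrow> nat \<Rightarrow> real" where
  "D_mf p i j = (if i = j then 0 else p * S_mf p i j * S_mf p j i)"
| "S_mf p i j = 1 - (\<Sum>k\<in>{1..<j}. D_mf p i k)"
  by pat_completeness auto
termination
  by (relation "Wellfounded.measure (\<lambda>x. case x of Inl (p, i, j) \<Rightarrow> 2 * (i + j) + (1::nat)
                                    | Inr (p, i, j) \<Rightarrow> 2 * (i + j))") auto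

definition idxN :: "nat \<Rightarrow> real \<Rightarrow> nat" where
  "idxN N \<alpha> = nat \<lfloor>real N * \<alpha>\<rfloor> + 1"

definition Dscaled :: "real \<Rightarrow> nat \<Rightarrow> real \<Rightarrow> real \<Rightarrow> real" where
  "Dscaled d N \<alpha> \<beta> =
     (let p = d / real N in
      if \<lfloor>real N * \<alpha>\<rfloor> \<noteq> \<lfloor>real N * \<beta>\<rfloor>
      then real N * D_mf p (idxN N \<alpha>) (idxN N \<beta>)
      else real N * p * (S_mf p (idxN N \<alpha>) (idxN N \<alpha>))^2)"

definition Dinf :: "real \<Rightarrow> real \<Rightarrow> real \<Rightarrow> real" where
  "Dinf d \<alpha> \<beta> = d * exp (d * \<bar>\<beta> - \<alpha>\<bar>) /
      (1 - exp (- d * min \<alpha> \<beta>) + exp (d * \<bar>\<beta> - \<alpha>\<bar>))^2"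

end

theory Submission
  imports Defs
begin

text \<open>
  Write \<open>surv a c = a / (a + c - 1)\<close>.  The limit profile is
  \<open>Dinf d \<alpha> \<beta> = d * surv (e^(d\<alpha>)) (e^(d\<beta>)) * surv (e^(d\<beta>)) (e^(d\<alpha>))\<close>,
  and the heart of the proof is a discrete analogue of this formula:
  \<open>S(i,j)\<close> is approximated by \<open>surv ((1+p)^(i-1)) ((1+p)^(m))\<close>, where \<open>m\<close> counts the
  indices \<open>k < j\<close>, \<open>k \<noteq> i\<close> that have been processed.

  The development proceeds in four steps.
  (1) Elementary facts about the recursion: \<open>S(i,j+1) = S(i,j) (1 - p S(j,i))\<close> and \<open>0 \<le> S \<le> 1\<close>.
  (2) The discrete profile satisfies the same recursion up to a defect \<open>2p\<^sup>2\<close> per step; a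
      stability estimate turns this into \<open>|S - profile| \<le> 2p((1+p)^(i+j) - 1)\<close>.
  (3) With \<open>p = d/N\<close>, powers \<open>(1+p)^t\<close> are within \<open>O(p)\<close> of \<open>e^(d t/N)\<close>, and \<open>surv\<close> is
      1-Lipschitz in each argument, so \<open>S\<close> is within \<open>O(1/N)\<close> of the continuum profile.
  (4) Both the scaled function and \<open>Dinf\<close> are \<open>d\<close> times a product of two such factors, which
      gives a uniform \<open>O(1/N)\<close> error bound; the theorem is its \<open>\<epsilon>\<close>-\<open>M\<close> reformulation.
\<close>

text \<open>The defining equations of \<open>D_mf\<close>/\<open>S_mf\<close> unfold indefinitely; we use them only through
  the recursion lemmas below.\<close>

declare S_mf.simps[simp del] D_mf.simps[simp del]

lemma S_zero: "S_mf p i 0 = 1"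
  by (subst S_mf.simps) simp

lemma S_Suc: "S_mf p i (Suc j) = S_mf p i j - (if j = 0 then 0 else D_mf p i j)"
proof (cases "j = 0")
  case True
  then show ?thesis by (subst S_mf.simps) (simp add: S_zero)
next
  case False
  then have "{1..<Suc j} = insert j {1..<j}" by auto
  then show ?thesis using False by (simp add: S_mf.simps[of p i "Suc j"] S_mf.simps[of p i j])
qed

lemma S_one: "S_mf p i (Suc 0) = 1"
  by (simp add: S_Suc S_zero)

lemma S_diag: "S_mf p i (Suc i) = S_mf p i i"
  by (simp add: S_Suc D_mf.simps)

lemma S_step: "j \<noteq> 0 \<Longrightarrow> j \<noteq> i \<Longrightarrow> S_mf p i (Suc j) = S_mf p i j * (1 - p * S_mf p j i)"
  by (simp add: S_Suc algebra_simps D_mf.simps)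

lemma S_bounds:
  assumes "0 \<le> p" "p \<le> 1"
  shows "0 \<le> S_mf p i j \<and> S_mf p i j \<le> 1"
proof (induction "i + j" arbitrary: i j rule: less_induct)
  case less
  show ?case
  proof (cases j)
    case 0
    then show ?thesis by (simp add: S_zero)
  next
    case (Suc k)
    consider "k = 0" | "k = i" | "k \<noteq> 0" "k \<noteq> i" by blast
    then show ?thesis
    proof cases
      case 1
      then show ?thesis using Suc by (simp add: S_one)
    next
      case 2
      then show ?thesis using Suc less[of i k] by (simp add: S_diag)
    next
      case 3
      have "0 \<le> S_mf p i k \<and> S_mf p i k \<le> 1" using less[of i k] Suc by simp
      moreover have "0 \<le> S_mf p k i \<and> S_mf p k i \<le> 1" using less[of k i] Suc by simp
      ultimately show ?thesis using assms 3 Suc by (simp add: S_step mult_le_one)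
    qed
  qed
qed

lemma abs_mult_contract:
  fixes u v r :: real
  assumes "0 \<le> u" "u \<le> 1" "\<bar>v\<bar> \<le> r"
  shows "\<bar>v * u\<bar> \<le> r"
proof -
  have "\<bar>v * u\<bar> = \<bar>v\<bar> * u" using assms by (simp add: abs_mult)
  also have "\<dots> \<le> \<bar>v\<bar> * 1" using assms by (intro mult_left_mono) auto
  finally show ?thesis using assms by simp
qed

definition surv :: "real \<Rightarrow> real \<Rightarrow> real" where
  "surv a c = a / (a + c - 1)"

lemma surv_bounds: "a \<ge> 1 \<Longrightarrow> c \<ge> 1 \<Longrightarrow> 0 \<le> surv a c \<and> surv a c \<le> 1"
  unfolding surv_def by auto

lemma surv_euler_step:
  fixes A B p :: real
  assumes "A \<ge> 1" "B \<ge> 1" "p \<ge> 0"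
  shows "\<bar>surv A B * (1 - p * surv B A) - surv A ((1 + p) * B)\<bar> \<le> p\<^sup>2"
proof -
  define u where "u = A + B - 1"
  define w where "w = A + (1 + p) * B - 1"
  have "w = u + p * B" unfolding u_def w_def by (simp add: algebra_simps)
  moreover have "0 \<le> p * B" using assms by simp
  ultimately have uw: "u \<ge> B" "w \<ge> A" "w = u + p * B" using assms unfolding u_def by linarith+
  have u0: "u > 0" and w0: "w > 0" using uw assms by auto
  have defect: "surv A B * (1 - p * surv B A) - surv A ((1 + p) * B) = - (A * (p * B)\<^sup>2 / (u\<^sup>2 * w))"
  proof -
    have "surv A B * (1 - p * surv B A) - surv A ((1 + p) * B) = A * (w * (u - p * B) - u\<^sup>2) / (u\<^sup>2 * w)"
      unfolding surv_def add.commute[of B A] u_def[symmetric] w_def[symmetric]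
      using u0 w0 by (simp add: field_simps power2_eq_square)
    also have "w * (u - p * B) - u\<^sup>2 = - (p * B)\<^sup>2"
      using uw(3) by (simp add: algebra_simps power2_eq_square)
    finally show ?thesis by simp
  qed
  have "A * B\<^sup>2 \<le> w * u\<^sup>2"
    using uw assms by (intro mult_mono power_mono) auto
  then have "A * (p * B)\<^sup>2 \<le> p\<^sup>2 * (u\<^sup>2 * w)"
    using mult_left_mono[of "A * B\<^sup>2" "w * u\<^sup>2" "p\<^sup>2"] by (simp add: power_mult_distrib mult_ac)
  then show ?thesis unfolding defect using u0 w0 assms by (simp add: divide_le_eq)
qed

lemma surv_euler_step_perturbed:
  fixes A B p Y :: real
  assumes "A \<ge> 1" "B \<ge> 1" "p \<ge> 0" "\<bar>Y - surv B A\<bar> \<le> p"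
  shows "\<bar>surv A ((1 + p) * B) - surv A B * (1 - p * Y)\<bar> \<le> 2 * p\<^sup>2"
proof -
  have s: "0 \<le> surv A B" "surv A B \<le> 1" using surv_bounds assms by auto
  have "surv A B * (1 - p * Y) - surv A B * (1 - p * surv B A) = surv A B * (p * (surv B A - Y))"
    by (simp add: algebra_simps)
  then have "\<bar>surv A B * (1 - p * Y) - surv A B * (1 - p * surv B A)\<bar> = surv A B * (p * \<bar>Y - surv B A\<bar>)"
    using s assms by (simp add: abs_mult abs_minus_commute)
  also have "\<dots> \<le> 1 * (p * p)"
    using s assms by (intro mult_mono mult_left_mono) auto
  finally show ?thesis
    using surv_euler_step[OF assms(1-3)] by (simp add: abs_le_iff power2_eq_square)
qed

lemma surv_rescale_second:
  fixes a c p :: real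
  assumes "a \<ge> 1" "c \<ge> 1" "p \<ge> 0"
  shows "\<bar>surv a c - surv a ((1 + p) * c)\<bar> \<le> p"
proof -
  have c: "c \<le> (1 + p) * c" using assms by (simp add: distrib_right)
  then have pos: "a + c - 1 > 0" "a + (1 + p) * c - 1 > 0" using assms by linarith+
  have "surv a c - surv a ((1 + p) * c) = p * (surv c a * surv a ((1 + p) * c))"
    unfolding surv_def using pos by (simp add: add.commute[of c a] field_simps)
  moreover have "0 \<le> surv c a * surv a ((1 + p) * c)" "surv c a * surv a ((1 + p) * c) \<le> 1"
    using surv_bounds[of c a] surv_bounds[of a "(1 + p) * c"] assms c by (auto simp: mult_le_one)
  ultimately show ?thesis using assms abs_mult_contract[of _ p p] by simp
qed

lemma surv_rescale_first:
  fixes a c p :: real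
  assumes "a \<ge> 1" "c \<ge> 1" "p \<ge> 0"
  shows "\<bar>surv ((1 + p) * a) c - surv a c\<bar> \<le> p"
proof -
  have "a \<le> (1 + p) * a" using assms by (simp add: distrib_right)
  then have den: "a \<le> (1 + p) * a + c - 1" "(1 + p) * a + c - 1 > 0" "a + c - 1 > 0"
    using assms by linarith+
  then have q: "0 \<le> a / ((1 + p) * a + c - 1)" "a / ((1 + p) * a + c - 1) \<le> 1"
    using assms by (simp_all add: divide_le_eq_1)
  have s: "0 \<le> 1 - surv a c" "1 - surv a c \<le> 1" using surv_bounds[of a c] assms by auto
  have "surv ((1 + p) * a) c - surv a c = p * ((1 - surv a c) * (a / ((1 + p) * a + c - 1)))"
    unfolding surv_def using den by (simp add: field_simps)
  then show ?thesis
    using assms s q by (simp only:) (intro abs_mult_contract mult_nonneg_nonneg mult_le_one, auto)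
qed

text \<open>Among the indices \<open>1, \<dots>, j - 1\<close>, \<open>active_steps i j\<close> counts those
  different from \<open>i\<close>, i.e. the steps that actually shrink \<open>S(i,\<cdot>)\<close>; each of them
  contributes a factor \<open>1 + p\<close> to the second argument of \<open>surv\<close>.\<close>

definition active_steps :: "nat \<Rightarrow> nat \<Rightarrow> nat" where
  "active_steps i j = (if j \<le> i then j - 1 else j - 2)"

definition S_profile :: "real \<Rightarrow> nat \<Rightarrow> nat \<Rightarrow> real" where
  "S_profile p i j = surv ((1 + p) ^ (i - 1)) ((1 + p) ^ active_steps i j)"

lemma S_profile_bounds: "0 \<le> p \<Longrightarrow> 0 \<le> S_profile p i j \<and> S_profile p i j \<le> 1"
  unfolding S_profile_def by (intro surv_bounds one_le_power) auto

lemma S_profile_consistency: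
  fixes p :: real
  assumes p: "0 \<le> p" and ij: "i \<ge> 1" "j \<ge> 1" "j \<noteq> i"
  shows "\<bar>S_profile p i (Suc j) - S_profile p i j * (1 - p * S_profile p j i)\<bar> \<le> 2 * p\<^sup>2"
proof -
  have ge1: "\<And>k. (1 + p) ^ k \<ge> 1" using p by (auto intro: one_le_power)
  define A where "A = (1 + p) ^ (i - 1)"
  consider "j < i" | "i < j" using ij(3) nat_neq_iff by blast
  then show ?thesis
  proof cases
    case 1
    define B where "B = (1 + p) ^ (j - 1)"
    define A' where "A' = (1 + p) ^ (i - 2)"
    have "i - 1 = Suc (i - 2)" "j = Suc (j - 1)" using 1 ij by arith+
    then have A: "A = (1 + p) * A'" and B: "(1 + p) ^ j = (1 + p) * B"
      unfolding A_def A'_def B_def by (metis power_Suc)+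
    have "active_steps i (Suc j) = j" "active_steps i j = j - 1" "active_steps j i = i - 2"
      using 1 by (auto simp: active_steps_def)
    then have X: "S_profile p i (Suc j) = surv A ((1 + p) * B)" "S_profile p i j = surv A B"
      "S_profile p j i = surv B A'"
      unfolding S_profile_def A_def B_def A'_def by (simp_all add: B[unfolded B_def])
    have "\<bar>S_profile p j i - surv B A\<bar> \<le> p"
      unfolding X A using surv_rescale_second ge1 p A'_def B_def by blast
    then show ?thesis
      unfolding X(1,2) using surv_euler_step_perturbed ge1 p A_def B_def by blast
  next
    case 2
    define B where "B = (1 + p) ^ (j - 2)"
    have j: "j - 1 = Suc (j - 2)" using 2 ij by arith
    have "active_steps i (Suc j) = j - 1" "active_steps i j = j - 2" "active_steps j i = i - 1"
      using 2 by (auto simp: active_steps_def)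
    then have X: "S_profile p i (Suc j) = surv A ((1 + p) * B)" "S_profile p i j = surv A B"
      "S_profile p j i = surv ((1 + p) * B) A"
      unfolding S_profile_def A_def B_def by (simp_all only: j power_Suc)
    have "\<bar>S_profile p j i - surv B A\<bar> \<le> p"
      unfolding X using surv_rescale_first ge1 p A_def B_def by blast
    then show ?thesis
      unfolding X(1,2) using surv_euler_step_perturbed ge1 p A_def B_def by blast
  qed
qed

lemma error_propagation_step:
  fixes S1 S2 X1 X2 X3 E \<delta> p :: real
  assumes p: "0 \<le> p" "p \<le> 1"
    and err: "\<bar>S1 - X1\<bar> \<le> E" "\<bar>S2 - X2\<bar> \<le> E"
    and bounds: "0 \<le> S2" "S2 \<le> 1" "0 \<le> X1" "X1 \<le> 1"
    and defect: "\<bar>X3 - X1 * (1 - p * X2)\<bar> \<le> \<delta>"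
  shows "\<bar>S1 * (1 - p * S2) - X3\<bar> \<le> (1 + p) * E + \<delta>"
proof -
  have f: "0 \<le> 1 - p * S2" "1 - p * S2 \<le> 1" using p bounds by (auto simp: mult_le_one)
  have "\<bar>(S1 - X1) * (1 - p * S2)\<bar> = \<bar>S1 - X1\<bar> * (1 - p * S2)"
    using f by (simp add: abs_mult)
  also have "\<dots> \<le> E * 1" using f err(1) by (intro mult_mono) auto
  finally have t1: "\<bar>(S1 - X1) * (1 - p * S2)\<bar> \<le> E" by simp
  have "\<bar>p * X1 * (X2 - S2)\<bar> = p * (X1 * \<bar>S2 - X2\<bar>)"
    using p bounds by (simp add: abs_mult abs_minus_commute)
  also have "\<dots> \<le> p * (1 * E)"
    using p bounds err(2) by (intro mult_left_mono mult_mono) auto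
  finally have t2: "\<bar>p * X1 * (X2 - S2)\<bar> \<le> p * E" by simp
  have "S1 * (1 - p * S2) - X3
      = (S1 - X1) * (1 - p * S2) + p * X1 * (X2 - S2) - (X3 - X1 * (1 - p * X2))"
    by (simp add: algebra_simps)
  then have "\<bar>S1 * (1 - p * S2) - X3\<bar> \<le> E + p * E + \<delta>"
    using t1 t2 defect unfolding abs_le_iff by argo
  then show ?thesis by (simp add: algebra_simps)
qed

text \<open>The bound
  \<open>2p((1+p)^n - 1)\<close> with \<open>n = i + j\<close> is exactly the solution of \<open>E' = (1+p) E + 2p\<^sup>2\<close>.\<close>

lemma S_profile_error:
  fixes p :: real
  assumes p: "0 \<le> p" "p \<le> 1"
  shows "i \<ge> 1 \<Longrightarrow> j \<ge> 1 \<Longrightarrow> \<bar>S_mf p i j - S_profile p i j\<bar> \<le> 2 * p * ((1 + p) ^ (i + j) - 1)"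
proof (induction "i + j" arbitrary: i j rule: less_induct)
  case less
  have mono: "2 * p * ((1 + p) ^ m - 1) \<le> 2 * p * ((1 + p) ^ n - 1)" if "m \<le> n" for m n
    using p that by (intro mult_left_mono diff_right_mono power_increasing) auto
  obtain k where j: "j = Suc k" using less.prems by (cases j) auto
  consider "k = 0" | "k = i" | "k \<noteq> 0" "k \<noteq> i" by blast
  then show ?case
  proof cases
    case 1
    have "S_profile p i j = 1"
      using j 1 less.prems one_le_power[of "1 + p" "i - 1"] p
      unfolding S_profile_def active_steps_def surv_def by simp
    then show ?thesis using j 1 mono[of 0 "i + j"] by (simp add: S_one)
  next
    case 2
    have "S_mf p i j = S_mf p i k" "S_profile p i j = S_profile p i k"
      using j 2 by (simp_all add: S_diag S_profile_def active_steps_def)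
    then show ?thesis using less.hyps[of i k] less.prems j 2 mono[of "i + k" "i + j"] by simp
  next
    case 3
    define E where "E = 2 * p * ((1 + p) ^ (i + k) - 1)"
    have "\<bar>S_mf p i j - S_profile p i j\<bar> \<le> (1 + p) * E + 2 * p\<^sup>2"
      unfolding j S_step[OF 3]
    proof (rule error_propagation_step[OF p])
      show "\<bar>S_mf p i k - S_profile p i k\<bar> \<le> E" "\<bar>S_mf p k i - S_profile p k i\<bar> \<le> E"
        unfolding E_def using less.hyps[of i k] less.hyps[of k i] less.prems j 3
        by (auto simp: add.commute)
      show "0 \<le> S_mf p k i" "S_mf p k i \<le> 1" using S_bounds p by auto
      show "0 \<le> S_profile p i k" "S_profile p i k \<le> 1" using S_profile_bounds p by auto
      show "\<bar>S_profile p i (Suc k) - S_profile p i k * (1 - p * S_profile p k i)\<bar> \<le> 2 * p\<^sup>2"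
        using S_profile_consistency p less.prems 3 by auto
    qed
    also have "(1 + p) * E + 2 * p\<^sup>2 = 2 * p * ((1 + p) ^ (i + j) - 1)"
      unfolding E_def j by (simp add: algebra_simps power2_eq_square)
    finally show ?thesis .
  qed
qed

text \<open>Continuum limit of the exponents: if \<open>t p \<le> x < (t + 2) p\<close> and \<open>x \<le> d\<close>, then
  \<open>(1+p)^t\<close> is within \<open>O(p)\<close> of \<open>e^x\<close>, using \<open>p - p\<^sup>2 \<le> ln (1+p) \<le> p\<close>.\<close>

lemma pow_exp_approx:
  fixes p x d :: real and t :: nat
  assumes p: "0 \<le> p" "p \<le> 1" and x: "real t * p \<le> x" "x \<le> (real t + 2) * p" "x \<le> d"
  shows "\<bar>(1 + p) ^ t - exp x\<bar> \<le> p * (exp d * (2 + d))"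
proof -
  have "(1 + p) ^ t \<le> exp p ^ t"
    using p by (intro power_mono) auto
  also have "\<dots> = exp (real t * p)" by (simp add: exp_of_nat_mult)
  also have "\<dots> \<le> exp x" using x by simp
  finally have upper: "(1 + p) ^ t \<le> exp x" .
  define y where "y = real t * (p - p\<^sup>2)"
  have "exp y \<le> exp (real t * ln (1 + p))"
    unfolding y_def using p ln_one_plus_pos_lower_bound[of p] by (intro exp_mono mult_left_mono) auto
  also have "\<dots> = (1 + p) ^ t" using p by (simp add: exp_of_nat_mult)
  finally have lower: "exp y \<le> (1 + p) ^ t" .
  have "0 \<le> real t * p\<^sup>2" by simp
  then have "y \<le> x" unfolding y_def right_diff_distrib using x by linarith
  have "exp x * (1 + (y - x)) \<le> exp x * exp (y - x)"
    by (intro mult_left_mono exp_ge_add_one_self) auto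
  then have "exp x - exp y \<le> exp x * (x - y)" by (simp add: exp_diff algebra_simps)
  also have "\<dots> \<le> exp d * ((2 + d) * p)"
  proof (intro mult_mono)
    have "real t * p\<^sup>2 \<le> d * p"
      using x p by (simp add: power2_eq_square mult.assoc[symmetric] mult_right_mono)
    then show "x - y \<le> (2 + d) * p" using x unfolding y_def by (simp add: algebra_simps)
  qed (use x \<open>y \<le> x\<close> in auto)
  finally show ?thesis using upper lower by (simp add: abs_le_iff algebra_simps)
qed

lemma surv_lipschitz:
  assumes "a \<ge> 1" "a' \<ge> 1" "c \<ge> 1" "c' \<ge> 1"
  shows "\<bar>surv a c - surv a' c'\<bar> \<le> \<bar>a - a'\<bar> + \<bar>c - c'\<bar>"
proof -
  have first: "\<bar>surv a c - surv a' c\<bar> \<le> \<bar>a - a'\<bar>"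
  proof -
    have eq: "surv a c - surv a' c = (a - a') / (a' + c - 1) * (1 - surv a c)"
      unfolding surv_def using assms by (simp add: field_simps)
    have "\<bar>(a - a') / (a' + c - 1)\<bar> \<le> \<bar>a - a'\<bar>"
      using assms by (simp add: abs_divide divide_le_eq mult_le_cancel_left1)
    then show ?thesis unfolding eq
      using surv_bounds[of a c] assms by (intro abs_mult_contract) auto
  qed
  have second: "\<bar>surv a' c - surv a' c'\<bar> \<le> \<bar>c - c'\<bar>"
  proof -
    have eq: "surv a' c - surv a' c' = (c' - c) / (a' + c' - 1) * surv a' c"
      unfolding surv_def using assms by (simp add: field_simps)
    have "\<bar>(c' - c) / (a' + c' - 1)\<bar> \<le> \<bar>c - c'\<bar>"
      using assms by (simp add: abs_divide divide_le_eq mult_le_cancel_left1 abs_minus_commute)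
    then show ?thesis unfolding eq
      using surv_bounds[of a' c] assms by (intro abs_mult_contract) auto
  qed
  show ?thesis using first second by linarith
qed

lemma Dinf_sym: "Dinf d \<alpha> \<beta> = Dinf d \<beta> \<alpha>"
  unfolding Dinf_def by (simp add: abs_minus_commute min.commute)

lemma Dinf_surv_form:
  "Dinf d \<alpha> \<beta> = d * (surv (exp (d * \<alpha>)) (exp (d * \<beta>)) * surv (exp (d * \<beta>)) (exp (d * \<alpha>)))"
proof -
  have ordered: "Dinf d \<alpha> \<beta> = d * (surv (exp (d * \<alpha>)) (exp (d * \<beta>)) * surv (exp (d * \<beta>)) (exp (d * \<alpha>)))"
    if "\<alpha> \<le> \<beta>" for \<alpha> \<beta>
  proof -
    define a b where "a = exp (d * \<alpha>)" and "b = exp (d * \<beta>)"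
    have a: "a > 0" unfolding a_def by simp
    have exps: "exp (d * \<bar>\<beta> - \<alpha>\<bar>) = b / a" "exp (- d * min \<alpha> \<beta>) = 1 / a"
      using that unfolding a_def b_def by (simp_all add: exp_diff exp_minus right_diff_distrib inverse_eq_divide)
    have "1 - 1 / a + b / a = (a + b - 1) / a" using a by (simp add: field_simps)
    then have "Dinf d \<alpha> \<beta> = d * (b / a) / ((a + b - 1) / a)\<^sup>2"
      unfolding Dinf_def exps by simp
    also have "\<dots> = d * (surv a b * surv b a)"
      unfolding surv_def using a by (simp add: field_simps power2_eq_square add.commute[of b a])
    finally show ?thesis unfolding a_def b_def .
  qed
  show ?thesis
  proof (cases "\<alpha> \<le> \<beta>")
    case True
    then show ?thesis using ordered by blast
  next
    case False
    then show ?thesis using ordered[of \<beta> \<alpha>] Dinf_sym[of d \<alpha> \<beta>] by (simp add: mult.commute)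
  qed
qed

lemma idxN_props:
  assumes "0 < N" "0 \<le> \<alpha>" "\<alpha> < 1"
  shows "1 \<le> idxN N \<alpha>" "idxN N \<alpha> \<le> N"
    "real (idxN N \<alpha> - 1) \<le> real N * \<alpha>" "real N * \<alpha> < real (idxN N \<alpha> - 1) + 1"
proof -
  have f0: "0 \<le> \<lfloor>real N * \<alpha>\<rfloor>" using assms by simp
  have "real N * \<alpha> < real N" using assms by simp
  then have "\<lfloor>real N * \<alpha>\<rfloor> < int N" by (simp add: floor_less_iff)
  have r: "real (idxN N \<alpha> - 1) = real_of_int \<lfloor>real N * \<alpha>\<rfloor>" unfolding idxN_def using f0 by simp
  show "1 \<le> idxN N \<alpha>" unfolding idxN_def by simp
  show "idxN N \<alpha> \<le> N" unfolding idxN_def using \<open>\<lfloor>real N * \<alpha>\<rfloor> < int N\<close> f0 by linarith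
  show "real (idxN N \<alpha> - 1) \<le> real N * \<alpha>" unfolding r by (rule of_int_floor_le)
  show "real N * \<alpha> < real (idxN N \<alpha> - 1) + 1" unfolding r by (rule real_of_int_floor_add_one_gt)
qed

lemma Dscaled_product_form:
  assumes "0 < N" "0 \<le> \<alpha>" "0 \<le> \<beta>"
  shows "Dscaled d N \<alpha> \<beta> = d * (S_mf (d / real N) (idxN N \<alpha>) (idxN N \<beta>) * S_mf (d / real N) (idxN N \<beta>) (idxN N \<alpha>))"
proof (cases "\<lfloor>real N * \<alpha>\<rfloor> = \<lfloor>real N * \<beta>\<rfloor>")
  case True
  then have "idxN N \<alpha> = idxN N \<beta>" unfolding idxN_def by simp
  then show ?thesis unfolding Dscaled_def Let_def using True assms by (simp add: power2_eq_square)
next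
  case False
  then have "idxN N \<alpha> \<noteq> idxN N \<beta>" unfolding idxN_def using assms by (simp add: eq_nat_nat_iff)
  then show ?thesis unfolding Dscaled_def Let_def using False assms by (simp add: D_mf.simps)
qed

lemma S_limit_error:
  fixes d :: real and N :: nat
  defines "p \<equiv> d / real N"
  assumes d: "0 < d" "d < real N" and ab: "0 \<le> \<alpha>" "\<alpha> < 1" "0 \<le> \<beta>" "\<beta> < 1"
  shows "\<bar>S_mf p (idxN N \<alpha>) (idxN N \<beta>) - surv (exp (d * \<alpha>)) (exp (d * \<beta>))\<bar>
    \<le> p * (2 * exp (2 * d) + 2 * exp d * (2 + d))"
proof -
  define i j where "i = idxN N \<alpha>" and "j = idxN N \<beta>"
  have N: "0 < N" using d by simp
  have p: "0 \<le> p" "p \<le> 1" and Np: "real N * p = d" unfolding p_def using d by auto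
  note i = idxN_props[OF N ab(1,2), folded i_def]
  note j = idxN_props[OF N ab(3,4), folded j_def]
  have approx: "\<bar>(1 + p) ^ t - exp (d * \<gamma>)\<bar> \<le> p * (exp d * (2 + d))"
    if "real t \<le> real N * \<gamma>" "real N * \<gamma> < real t + 2" "\<gamma> < 1" for t :: nat and \<gamma> :: real
  proof (rule pow_exp_approx[OF p])
    have dg: "d * \<gamma> = p * (real N * \<gamma>)" using Np by (simp add: algebra_simps)
    have "p * real t \<le> p * (real N * \<gamma>)" using that(1) p(1) by (rule mult_left_mono)
    then show "real t * p \<le> d * \<gamma>" unfolding dg by (simp add: mult.commute)
    have "p * (real N * \<gamma>) \<le> p * (real t + 2)" using that(2) p(1) by (intro mult_left_mono) auto
    then show "d * \<gamma> \<le> (real t + 2) * p" unfolding dg by (simp add: mult.commute)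
    show "d * \<gamma> \<le> d" using that d by simp
  qed
  have "\<bar>S_mf p i j - S_profile p i j\<bar> \<le> 2 * p * ((1 + p) ^ (i + j) - 1)"
    using S_profile_error p i j by blast
  also have "\<dots> \<le> 2 * p * (1 + p) ^ (2 * N)"
  proof -
    have "(1 + p) ^ (i + j) \<le> (1 + p) ^ (2 * N)" using p i j by (intro power_increasing) auto
    then show ?thesis using p by (intro mult_left_mono) auto
  qed
  also have "\<dots> \<le> 2 * p * exp (2 * d)"
  proof -
    have "(1 + p) ^ (2 * N) \<le> exp p ^ (2 * N)" using p by (intro power_mono) auto
    also have "\<dots> = exp (2 * d)" using Np by (simp flip: exp_of_nat_mult)
    finally show ?thesis using p by (intro mult_left_mono) auto
  qed
  finally have profile: "\<bar>S_mf p i j - S_profile p i j\<bar> \<le> 2 * p * exp (2 * d)" .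
  have first: "\<bar>(1 + p) ^ (i - 1) - exp (d * \<alpha>)\<bar> \<le> p * (exp d * (2 + d))"
    using i ab by (intro approx) auto
  have second: "\<bar>(1 + p) ^ active_steps i j - exp (d * \<beta>)\<bar> \<le> p * (exp d * (2 + d))"
  proof (cases "j \<le> i")
    case True
    then show ?thesis using j ab by (intro approx) (auto simp: active_steps_def)
  next
    case False
    then have steps: "active_steps i j = j - 2" by (simp add: active_steps_def)
    have "real (j - 1) = real (j - 2) + 1" using False i by linarith
    then show ?thesis unfolding steps using j(3,4) ab(4) by (intro approx) linarith+
  qed
  have "\<bar>S_profile p i j - surv (exp (d * \<alpha>)) (exp (d * \<beta>))\<bar> \<le> 2 * (p * (exp d * (2 + d)))"
    unfolding S_profile_def using surv_lipschitz[of "(1 + p) ^ (i - 1)" "exp (d * \<alpha>)"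
        "(1 + p) ^ active_steps i j" "exp (d * \<beta>)"] first second p d ab
    by (simp add: one_le_power)
  with profile show ?thesis unfolding i_def j_def by (simp add: algebra_simps abs_le_iff)
qed

lemma product_perturbation:
  fixes a b c e :: real
  assumes "0 \<le> b" "b \<le> 1" "0 \<le> c" "c \<le> 1"
  shows "\<bar>a * b - c * e\<bar> \<le> \<bar>a - c\<bar> + \<bar>b - e\<bar>"
proof -
  have "a * b - c * e = (a - c) * b + (b - e) * c" by (simp add: algebra_simps)
  moreover have "\<bar>(a - c) * b\<bar> \<le> \<bar>a - c\<bar>" "\<bar>(b - e) * c\<bar> \<le> \<bar>b - e\<bar>"
    using assms by (auto intro: abs_mult_contract)
  ultimately show ?thesis by (metis abs_triangle_ineq add_mono order_trans)
qed

lemma Dscaled_uniform_error: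
  fixes d :: real and N :: nat
  assumes d: "0 < d" "d < real N" and ab: "0 \<le> \<alpha>" "\<alpha> < 1" "0 \<le> \<beta>" "\<beta> < 1"
  shows "\<bar>Dscaled d N \<alpha> \<beta> - Dinf d \<alpha> \<beta>\<bar> \<le> d / real N * (4 * d * (exp (2 * d) + exp d * (2 + d)))"
proof -
  define p where "p = d / real N"
  have "0 \<le> p" "p \<le> 1" "0 < N" unfolding p_def using d by auto
  define a b where "a = exp (d * \<alpha>)" and "b = exp (d * \<beta>)"
  have ab1: "1 \<le> a" "1 \<le> b" unfolding a_def b_def using d ab by auto
  have "\<bar>Dscaled d N \<alpha> \<beta> - Dinf d \<alpha> \<beta>\<bar>
      = d * \<bar>S_mf p (idxN N \<alpha>) (idxN N \<beta>) * S_mf p (idxN N \<beta>) (idxN N \<alpha>) - surv a b * surv b a\<bar>"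
    unfolding Dscaled_product_form[OF \<open>0 < N\<close> ab(1,3)] Dinf_surv_form a_def b_def p_def
    using d by (simp add: abs_mult right_diff_distrib[symmetric])
  also have "\<dots> \<le> d * (\<bar>S_mf p (idxN N \<alpha>) (idxN N \<beta>) - surv a b\<bar> + \<bar>S_mf p (idxN N \<beta>) (idxN N \<alpha>) - surv b a\<bar>)"
    using d S_bounds[OF \<open>0 \<le> p\<close> \<open>p \<le> 1\<close>] surv_bounds[OF ab1]
    by (intro mult_left_mono product_perturbation) auto
  also have "\<dots> \<le> d * (2 * (p * (2 * exp (2 * d) + 2 * exp d * (2 + d))))"
    using S_limit_error[OF d ab, folded p_def a_def b_def]
      S_limit_error[OF d ab(3,4,1,2), folded p_def a_def b_def] d
    by (intro mult_left_mono) auto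
  also have "\<dots> = p * (4 * d * (exp (2 * d) + exp d * (2 + d)))" by (simp add: algebra_simps)
  finally show ?thesis unfolding p_def .
qed

theorem theorem1:
  fixes d :: real
  assumes "d > 0"
  shows "\<forall>\<epsilon>>0. \<exists>M::nat. \<forall>N. N \<ge> M \<and> real N > d \<longrightarrow>
           (\<forall>\<alpha> \<beta>. 0 \<le> \<alpha> \<and> \<alpha> < 1 \<and> 0 \<le> \<beta> \<and> \<beta> < 1 \<longrightarrow>
              \<bar>Dscaled d N \<alpha> \<beta> - Dinf d \<alpha> \<beta>\<bar> < \<epsilon>)"
proof (intro allI impI)
  fix \<epsilon> :: real
  assume "\<epsilon> > 0"
  define K where "K = d * (4 * d * (exp (2 * d) + exp d * (2 + d)))"
  obtain M :: nat where M: "K / \<epsilon> < real M" using reals_Archimedean2 by blast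
  show "\<exists>M::nat. \<forall>N. N \<ge> M \<and> real N > d \<longrightarrow>
           (\<forall>\<alpha> \<beta>. 0 \<le> \<alpha> \<and> \<alpha> < 1 \<and> 0 \<le> \<beta> \<and> \<beta> < 1 \<longrightarrow> \<bar>Dscaled d N \<alpha> \<beta> - Dinf d \<alpha> \<beta>\<bar> < \<epsilon>)"
  proof (intro exI[of _ M] allI impI, elim conjE)
    fix N :: nat and \<alpha> \<beta> :: real
    assume N: "M \<le> N" "d < real N" and "0 \<le> \<alpha>" "\<alpha> < 1" "0 \<le> \<beta>" "\<beta> < 1"
    then have "\<bar>Dscaled d N \<alpha> \<beta> - Dinf d \<alpha> \<beta>\<bar> \<le> K / real N"
      using Dscaled_uniform_error[of d N] assms unfolding K_def by simp
    also have "K / real N < \<epsilon>"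
    proof -
      have "K < \<epsilon> * real M" using M \<open>\<epsilon> > 0\<close> by (simp add: divide_less_eq mult.commute)
      also have "\<dots> \<le> \<epsilon> * real N" using N \<open>\<epsilon> > 0\<close> by simp
      finally show ?thesis using N assms by (simp add: divide_less_eq mult.commute)
    qed
    finally show "\<bar>Dscaled d N \<alpha> \<beta> - Dinf d \<alpha> \<beta>\<bar> < \<epsilon>" .
  qed
qed

end
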